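(* Let $W=\mathrm{inv}(\pi)$ and let $W^\ast=\mathrm{inv}(\pi^\ast)$, where $\pi^\ast$ is constructed from $\pi$ as described in the context. Then $W^\ast$ has the $W$-size biased distribution.
   Context: Let $h\ge 2$, let $n_1,\dots,n_h$ be positive integers, $n=n_1+\dots+n_h\ge 4$, and let $\pi$ be a uniformly distributed permutation of the multiset $\{1^{n_1},\dots,h^{n_h}\}$ (a sequence $(\pi(1),\dots,\pi(n))$ in which each $a$ occurs $n_a$ times, all such sequences equally likely). $\mathrm{inv}(\pi)$ is the number of pairs $i<j$ with $\pi(i)>\pi(j)$. For a nonnegative integrable random variable $W$ with $\mathbb{E}W>0$, a random variable $W^\ast$ has the $W$-size biased distribution if $\mathbb{E}(Wf(W))=\mathbb{E}W\,\mathbb{E}f(W^\ast)$ for all continuous $f$ for which the left side exists. Construction of $\pi^\ast$: Let $I$ be uniformly distributed over pairs $(i,j)$ with $1\le i<j\le n$; let $J=(a,b)$, for $h\ge a>b\ge 1$, with probability $n_an_b/\sum_{c<d}n_cn_d$; $\pi,I,J$ are independent. If $I=(i,j)$ and $\pi(i)>\pi(j)$, set $\pi^\ast=\pi$. If $I=(i,j)$, $\pi(i)\le\pi(j)$ and $J=(a,b)$: choose $i^\ast$ uniformly from $\{k:\pi(k)=a\}$ and $j^\ast$ uniformly from $\{k:\pi(k)=b\}$, independently of each other and of all else. Then: (1) if $\{i,j\}\cap\{i^\ast,j^\ast\}=\emptyset$, or $i=i^\ast,j\ne j^\ast$, or $i\ne i^\ast,j=j^\ast$, obtain $\pi^\ast$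 from $\pi$ by exchanging the entries at positions $i$ and $i^\ast$ and exchanging the entries at positions $j$ and $j^\ast$; (2) if $i=j^\ast$ and $j=i^\ast$, obtain $\pi^\ast$ by exchanging the entries at positions $i$ and $j$; (3) if $i=j^\ast$, $j\ne i^\ast$, set $\pi^\ast(i)=\pi(i^\ast)$, $\pi^\ast(j)=\pi(i)$, $\pi^\ast(i^\ast)=\pi(j)$, and $\pi^\ast(k)=\pi(k)$ for $k\notin\{i,j,i^\ast\}$; (4) if $i\ne j^\ast$, $j=i^\ast$, set $\pi^\ast(i)=\pi(j)$, $\pi^\ast(j)=\pi(j^\ast)$, $\pi^\ast(j^\ast)=\pi(i)$, and $\pi^\ast(k)=\pi(k)$ for $k\notin\{i,j,j^\ast\}$. *)

theory Defs
  imports "HOL-Probability.Probability"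
begin

text \<open>Sequences are lists; positions are 0-indexed (0 .. N-1); values are 1..h.
  The multiplicities are given by a function ns with ns a = n_a for a in {1..h}.\<close>

definition total :: "(nat \<Rightarrow> nat) \<Rightarrow> nat \<Rightarrow> nat" where
  "total ns h = (\<Sum>a\<in>{1..h}. ns a)"

definition mperms :: "(nat \<Rightarrow> nat) \<Rightarrow> nat \<Rightarrow> nat list set" where
  "mperms ns h = {xs. length xs = total ns h \<and> set xs \<subseteq> {1..h} \<and>
                     (\<forall>a\<in>{1..h}. count_list xs a = ns a)}"

definition inversions :: "nat list \<Rightarrow> nat" where
  "inversions xs = card {(i, j). i < j \<and> j < length xs \<and> xs ! i > xs ! j}"

definition Ipairs :: "nat \<Rightarrow> (nat \<times> nat) set" where
  "Ipairs N = {(i, j). i < j \<and> j < N}"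

definition Jmset :: "(nat \<Rightarrow> nat) \<Rightarrow> nat \<Rightarrow> (nat \<times> nat) multiset" where
  "Jmset ns h = (\<Sum>a\<in>{1..h}. \<Sum>b\<in>{1..<a}. replicate_mset (ns a * ns b) (a, b))"

definition Jpmf :: "(nat \<Rightarrow> nat) \<Rightarrow> nat \<Rightarrow> (nat \<times> nat) pmf" where
  "Jpmf ns h = pmf_of_multiset (Jmset ns h)"

definition step :: "nat list \<Rightarrow> nat \<Rightarrow> nat \<Rightarrow> nat \<Rightarrow> nat \<Rightarrow> nat list" where
  "step xs i j is js =
     (if i = js \<and> j = is then xs[i := xs ! j, j := xs ! i]
      else if i = js then xs[i := xs ! is, j := xs ! i, is := xs ! j]
      else if j = is then xs[i := xs ! j, j := xs ! js, js := xs ! i]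
      else (let ys = xs[i := xs ! is, is := xs ! i] in ys[j := ys ! js, js := ys ! j]))"

definition positions :: "nat list \<Rightarrow> nat \<Rightarrow> nat set" where
  "positions xs a = {k. k < length xs \<and> xs ! k = a}"

definition pi_pmf :: "(nat \<Rightarrow> nat) \<Rightarrow> nat \<Rightarrow> nat list pmf" where
  "pi_pmf ns h = pmf_of_set (mperms ns h)"

definition pistar_pmf :: "(nat \<Rightarrow> nat) \<Rightarrow> nat \<Rightarrow> nat list pmf" where
  "pistar_pmf ns h =
     do {
       xs \<leftarrow> pi_pmf ns h;
       (i, j) \<leftarrow> pmf_of_set (Ipairs (total ns h));
       (a, b) \<leftarrow> Jpmf ns h;
       if xs ! i > xs ! j then return_pmf xs
       else do {
         is \<leftarrow> pmf_of_set (positions xs a);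
         js \<leftarrow> pmf_of_set (positions xs b);
         return_pmf (step xs i j is js)
       }
     }"

definition size_biased :: "real pmf \<Rightarrow> real pmf \<Rightarrow> bool" where
  "size_biased W Ws \<longleftrightarrow>
     (\<forall>f :: real \<Rightarrow> real. continuous_on UNIV f \<longrightarrow>
        integrable (measure_pmf W) (\<lambda>w. w * f w) \<longrightarrow>
        integrable (measure_pmf Ws) f \<and>
        measure_pmf.expectation W (\<lambda>w. w * f w) =
          measure_pmf.expectation W (\<lambda>w. w) * measure_pmf.expectation Ws f)"

end

(* Fix the positions I = (i, j) and write N = n_1 + ... + n_h, T = sum over a > b of n_a n_b.
   If pi(i) > pi(j) then pi* = pi. Otherwise J = (a, b) has probability proportional to n_a n_b,
   the number of position pairs (s, t) with (pi(s), pi(t)) = (a, b), so the pair of positions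
   i* and j* is uniform among the T pairs (s, t) with pi(s) > pi(t). The map
   (pi, s, t) -> (pi*, u, v), where u and v are the positions to which pi(i) and pi(j) are moved,
   is an involution. It exchanges the triples with pi(i) <= pi(j) and pi(s) > pi(t) with the
   triples (sigma, u, v) where sigma(i) > sigma(j), u <> v and sigma(u) <= sigma(v). Hence, for
   fixed (i, j), a sigma with sigma(i) > sigma(j) is reached with total weight
   1 + K/T = N(N-1)/T, where K = N(N-1) - T counts the pairs (u, v), and no other sigma is
   reached. Summing over I, P(pi* = sigma) is proportional to inv(sigma) P(pi = sigma), which is
   the size-biased law. *)

theory Submission
  imports Defs "HOL-Combinatorics.Multiset_Permutations"
begin

lemma size_biased_map_pmfI:
  fixes P Q :: "'a pmf" and w :: "'a \<Rightarrow> real"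
  assumes fin: "finite (set_pmf P)" and proportional: "\<And>x. pmf Q x = c * w x * pmf P x"
  shows "size_biased (map_pmf w P) (map_pmf w Q)"
proof -
  let ?S = "set_pmf P"
  have setQ: "set_pmf Q \<subseteq> ?S"
    using proportional by (auto simp: set_pmf_eq)
  have EQ: "measure_pmf.expectation Q g = c * measure_pmf.expectation P (\<lambda>x. w x * g x)"
    for g :: "'a \<Rightarrow> real"
  proof -
    have "measure_pmf.expectation Q g = (\<Sum>x\<in>?S. g x * pmf Q x)"
      using fin setQ by (intro integral_measure_pmf_real) (auto simp: set_pmf_eq)
    also have "\<dots> = c * (\<Sum>x\<in>?S. (w x * g x) * pmf P x)"
      by (simp add: proportional sum_distrib_left mult_ac)
    also have "(\<Sum>x\<in>?S. (w x * g x) * pmf P x) = measure_pmf.expectation P (\<lambda>x. w x * g x)"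
      using fin by (intro integral_measure_pmf_real[symmetric]) (auto simp: set_pmf_eq)
    finally show ?thesis .
  qed
  have normalised: "c * measure_pmf.expectation P w = 1"
    using EQ[of "\<lambda>_. 1"] by simp
  show ?thesis
    unfolding size_biased_def
  proof (intro allI impI conjI)
    fix f :: "real \<Rightarrow> real"
    show "integrable (measure_pmf (map_pmf w Q)) f"
      using finite_subset[OF setQ fin] by (intro integrable_measure_pmf_finite) simp
    have "measure_pmf.expectation P w * measure_pmf.expectation (map_pmf w Q) f
        = (c * measure_pmf.expectation P w) * measure_pmf.expectation P (\<lambda>x. w x * f (w x))"
      by (simp add: EQ)
    then show "measure_pmf.expectation (map_pmf w P) (\<lambda>v. v * f v)
        = measure_pmf.expectation (map_pmf w P) (\<lambda>v. v) * measure_pmf.expectation (map_pmf w Q) f"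
      by (simp add: normalised)
  qed
qed

lemma pmf_of_set_Times:
  assumes "finite A" "A \<noteq> {}" "finite B" "B \<noteq> {}"
  shows "pmf_of_set (A \<times> B) = do {a \<leftarrow> pmf_of_set A; b \<leftarrow> pmf_of_set B; return_pmf (a, b)}"
proof -
  have "pmf_of_set (A \<times> B) = pair_pmf (pmf_of_set A) (pmf_of_set B)"
    using assms by (intro pmf_eqI) (clarsimp simp: pmf_pair card_cartesian_product indicator_def)
  then show ?thesis
    by (simp add: pair_pmf_def)
qed

lemma pmf_of_set_eq_bind_fibres:
  assumes "finite D" "D \<noteq> {}"
  shows "pmf_of_set D = map_pmf g (pmf_of_set D) \<bind> (\<lambda>v. pmf_of_set {d \<in> D. g d = v})"
    (is "_ = ?rhs")
proof (rule pmf_eqI)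
  fix d
  have fibre: "finite {d' \<in> D. g d' = g e}" "{d' \<in> D. g d' = g e} \<noteq> {}" if "e \<in> D" for e
    using assms that by auto
  have "pmf ?rhs d = (\<Sum>e\<in>D. indicator {d' \<in> D. g d' = g e} d / card {d' \<in> D. g d' = g e}) / card D"
    using assms fibre by (simp add: bind_map_pmf pmf_bind_pmf_of_set)
  also have "\<dots> = (\<Sum>e\<in>{d' \<in> D. g d' = g d}. indicator D d / card {d' \<in> D. g d' = g d}) / card D"
    using assms by (intro arg_cong2[where f = "(/)"] sum.mono_neutral_cong_right) (auto simp: indicator_def)
  also have "\<dots> = pmf (pmf_of_set D) d"
    using assms by (auto simp: indicator_def)
  finally show "pmf (pmf_of_set D) d = pmf ?rhs d" ..
qed

lemma mperms_eq_permutations_of_multiset: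
  "mperms ns h = permutations_of_multiset (\<Sum>a\<in>{1..h}. replicate_mset (ns a) a)"
proof -
  let ?A = "\<Sum>a\<in>{1..h}. replicate_mset (ns a) a"
  have count_A: "count ?A b = (if b \<in> {1..h} then ns b else 0)" for b
    by (simp add: count_sum sum.delta)
  have "xs \<in> mperms ns h \<longleftrightarrow> mset xs = ?A" for xs
  proof
    assume xs: "xs \<in> mperms ns h"
    show "mset xs = ?A"
    proof (rule multiset_eqI)
      fix b
      show "count (mset xs) b = count ?A b"
        unfolding count_A count_mset using xs by (auto simp: mperms_def count_list_0_iff)
    qed
  next
    assume xs: "mset xs = ?A"
    have "length xs = size ?A"
      by (metis xs size_mset)
    moreover have "set xs \<subseteq> {1..h}"
      by (metis xs set_mset_mset count_A count_eq_zero_iff subsetI)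
    moreover have "count_list xs b = (if b \<in> {1..h} then ns b else 0)" for b
      by (metis xs count_mset count_A)
    ultimately show "xs \<in> mperms ns h"
      by (simp add: mperms_def total_def)
  qed
  then show ?thesis
    by (auto simp: permutations_of_multiset_def)
qed

lemma finite_mperms: "finite (mperms ns h)"
  and mperms_nonempty: "mperms ns h \<noteq> {}"
  by (simp_all add: mperms_eq_permutations_of_multiset)

lemma length_mperms: "xs \<in> mperms ns h \<Longrightarrow> length xs = total ns h"
  by (simp add: mperms_def)

(* With (u, v) = landing i j s t, the step xs i j s t moves xs ! i to position u and xs ! j to
   position v; a second step with u, v restores xs. *)

definition landing :: "nat \<Rightarrow> nat \<Rightarrow> nat \<Rightarrow> nat \<Rightarrow> nat \<times> nat" where
  "landing i j s t =
     (if t = i \<and> s = j then (j, i) else if t = i then (j, s) else if s = j then (t, i) else (s, t))"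

definition step_source :: "nat \<Rightarrow> nat \<Rightarrow> nat \<Rightarrow> nat \<Rightarrow> nat \<Rightarrow> nat" where
  "step_source i j s t k =
     (if t = i \<and> s = j then (if k = i then j else if k = j then i else k)
      else if t = i then (if k = i then s else if k = j then i else if k = s then j else k)
      else if s = j then (if k = i then j else if k = j then t else if k = t then i else k)
      else (if k = i then s else if k = s then i else if k = j then t else if k = t then j else k))"

lemma length_step [simp]: "length (step xs i j s t) = length xs"
  by (simp add: step_def Let_def)

lemma nth_step:
  assumes "i \<noteq> j" "s \<noteq> t" "i < length xs" "j < length xs" "s < length xs" "t < length xs"
    and "k < length xs"
  shows "step xs i j s t ! k = xs ! step_source i j s t k"
  using assms unfolding step_def step_source_def Let_def
  by (cases "t = i"; cases "s = j") (simp_all add: nth_list_update)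

lemma step_nth_i_j:
  assumes "i \<noteq> j" "s \<noteq> t" "i < length xs" "j < length xs" "s < length xs" "t < length xs"
  shows "step xs i j s t ! i = xs ! s" "step xs i j s t ! j = xs ! t"
  using assms by (simp_all add: nth_step step_source_def)

lemma step_nth_landing:
  assumes "i \<noteq> j" "s \<noteq> t" "i < length xs" "j < length xs" "s < length xs" "t < length xs"
    and "landing i j s t = (u, v)"
  shows "step xs i j s t ! u = xs ! i" "step xs i j s t ! v = xs ! j"
  using assms by (auto simp: nth_step step_source_def landing_def split: if_splits)

lemma landing_bounded:
  assumes "s \<noteq> t" "i < n" "j < n" "s < n" "t < n" "landing i j s t = (u, v)"
  shows "u < n" "v < n" "u \<noteq> v"
  using assms by (auto simp: landing_def split: if_splits)

lemma landing_landing: "s \<noteq> t \<Longrightarrow> landing i j s t = (u, v) \<Longrightarrow> landing i j u v = (s, t)"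
  by (auto simp: landing_def split: if_splits)

lemma step_source_landing:
  assumes "i \<noteq> j" "s \<noteq> t" "landing i j s t = (u, v)"
  shows "step_source i j s t (step_source i j u v k) = k"
  using assms unfolding landing_def
  by (cases "t = i"; cases "s = j") (auto simp: step_source_def)

lemma step_step:
  assumes "i \<noteq> j" "s \<noteq> t" "i < length xs" "j < length xs" "s < length xs" "t < length xs"
    and "landing i j s t = (u, v)"
  shows "step (step xs i j s t) i j u v = xs"
proof (rule nth_equalityI)
  fix k assume "k < length (step (step xs i j s t) i j u v)"
  moreover have "u < length xs" "v < length xs" "u \<noteq> v"
    using landing_bounded[OF _ _ _ _ _ assms(7)] assms(2-6) by simp_all
  moreover have "step_source i j u v k < length xs" if "k < length xs"
    using that assms \<open>u < length xs\<close> \<open>v < length xs\<close> by (simp add: step_source_def)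
  ultimately show "step (step xs i j s t) i j u v ! k = xs ! k"
    using assms by (simp add: nth_step step_source_landing)
qed simp

lemma step_source_permutes:
  assumes "i \<noteq> j" "s \<noteq> t" "i < n" "j < n" "s < n" "t < n"
  shows "step_source i j s t permutes {..<n}"
proof (rule bij_imp_permutes)
  obtain u v where uv: "landing i j s t = (u, v)"
    by fastforce
  have "u < n" "v < n" "u \<noteq> v"
    using landing_bounded[OF _ _ _ _ _ uv] assms(2-6) by simp_all
  then show "bij_betw (step_source i j s t) {..<n} {..<n}"
    using assms uv landing_landing[OF \<open>s \<noteq> t\<close> uv]
    by (intro bij_betw_byWitness[where f' = "step_source i j u v"])
       (auto simp: step_source_landing, auto simp: step_source_def)
  show "step_source i j s t k = k" if "k \<notin> {..<n}" for k
    using that assms by (auto simp: step_source_def)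
qed

lemma mset_step:
  assumes "i \<noteq> j" "s \<noteq> t" "i < length xs" "j < length xs" "s < length xs" "t < length xs"
  shows "mset (step xs i j s t) = mset xs"
proof -
  have "step xs i j s t = permute_list (step_source i j s t) xs"
    using assms step_source_permutes[OF assms]
    by (intro nth_equalityI) (simp_all add: nth_step permute_list_nth)
  then show ?thesis
    using step_source_permutes[OF assms] by simp
qed

lemma step_in_mperms:
  assumes "xs \<in> mperms ns h" "i \<noteq> j" "s \<noteq> t" "i < length xs" "j < length xs" "s < length xs" "t < length xs"
  shows "step xs i j s t \<in> mperms ns h"
  using assms by (simp add: mperms_eq_permutations_of_multiset permutations_of_multiset_def mset_step)

definition desc_pairs :: "nat list \<Rightarrow> (nat \<times> nat) set" where
  "desc_pairs xs = {(s, t). s < length xs \<and> t < length xs \<and> xs ! t < xs ! s}"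

definition nondesc_pairs :: "nat list \<Rightarrow> (nat \<times> nat) set" where
  "nondesc_pairs xs = {(u, v). u < length xs \<and> v < length xs \<and> u \<noteq> v \<and> xs ! u \<le> xs ! v}"

lemma finite_desc_pairs [simp]: "finite (desc_pairs xs)"
  by (rule finite_subset[of _ "{..<length xs} \<times> {..<length xs}"]) (auto simp: desc_pairs_def)

lemma card_desc_pairs_add_nondesc_pairs:
  "card (desc_pairs xs) + card (nondesc_pairs xs)
     = card {(u, v). u < length xs \<and> v < length xs \<and> u \<noteq> v}"
proof -
  have "finite (nondesc_pairs xs)"
    by (rule finite_subset[of _ "{..<length xs} \<times> {..<length xs}"]) (auto simp: nondesc_pairs_def)
  moreover have "desc_pairs xs \<inter> nondesc_pairs xs = {}"
    by (auto simp: desc_pairs_def nondesc_pairs_def)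
  ultimately have "card (desc_pairs xs) + card (nondesc_pairs xs) = card (desc_pairs xs \<union> nondesc_pairs xs)"
    by (simp add: card_Un_disjoint)
  also have "desc_pairs xs \<union> nondesc_pairs xs = {(u, v). u < length xs \<and> v < length xs \<and> u \<noteq> v}"
    by (auto simp: desc_pairs_def nondesc_pairs_def)
  finally show ?thesis .
qed

lemma card_positions: "card (positions xs a) = count_list xs a"
  by (simp add: positions_def count_list_eq_length_filter length_filter_conv_card eq_commute)

lemma desc_pairs_fibre:
  "{d \<in> desc_pairs xs. (case d of (s, t) \<Rightarrow> (xs ! s, xs ! t)) = (a, b)}
     = (if b < a then positions xs a \<times> positions xs b else {})"
  by (auto simp: desc_pairs_def positions_def)

lemma count_Jmset:
  "count (Jmset ns h) (a, b) = (if a \<in> {1..h} \<and> b \<in> {1..<a} then ns a * ns b else 0)"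
proof -
  have "count (Jmset ns h) (a, b)
      = (\<Sum>a'\<in>{1..h}. if a' = a then (\<Sum>b'\<in>{1..<a'}. if b' = b then ns a' * ns b' else 0) else 0)"
    unfolding Jmset_def count_sum by (intro sum.cong refl) auto
  then show ?thesis
    by (simp add: sum.delta)
qed

lemma Jmset_eq_image_mset_desc_pairs:
  assumes "xs \<in> mperms ns h"
  shows "Jmset ns h = image_mset (\<lambda>(s, t). (xs ! s, xs ! t)) (mset_set (desc_pairs xs))"
proof (rule multiset_eqI)
  fix v :: "nat \<times> nat"
  obtain a b where v: "v = (a, b)"
    by fastforce
  have "count_list xs c = (if c \<in> {1..h} then ns c else 0)" for c
    using assms by (auto simp: mperms_def count_list_0_iff)
  then show "count (Jmset ns h) v = count (image_mset (\<lambda>(s, t). (xs ! s, xs ! t)) (mset_set (desc_pairs xs))) v"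
    by (simp add: v count_image_mset_eq_card_vimage desc_pairs_fibre card_positions
        card_cartesian_product count_Jmset)
qed

lemma card_desc_pairs:
  "xs \<in> mperms ns h \<Longrightarrow> card (desc_pairs xs) = size (Jmset ns h)"
  by (simp add: Jmset_eq_image_mset_desc_pairs)

lemma desc_pairs_nonempty:
  "xs \<in> mperms ns h \<Longrightarrow> Jmset ns h \<noteq> {#} \<Longrightarrow> desc_pairs xs \<noteq> {}"
  using card_desc_pairs[of xs ns h] by auto

lemma bind_Jpmf_positions:
  assumes xs: "xs \<in> mperms ns h" and ne: "desc_pairs xs \<noteq> {}"
  shows "Jpmf ns h \<bind> (\<lambda>(a, b). pmf_of_set (positions xs a) \<bind>
            (\<lambda>s. pmf_of_set (positions xs b) \<bind> (\<lambda>t. return_pmf (g s t))))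
         = map_pmf (\<lambda>(s, t). g s t) (pmf_of_set (desc_pairs xs))"
proof -
  let ?D = "desc_pairs xs" and ?val = "\<lambda>(s, t). (xs ! s, xs ! t)"
  have J: "Jpmf ns h = map_pmf ?val (pmf_of_set ?D)"
    using ne by (simp add: Jpmf_def Jmset_eq_image_mset_desc_pairs[OF xs] map_pmf_of_set)
  have fibre: "pmf_of_set {d \<in> ?D. ?val d = (a, b)}
      = pmf_of_set (positions xs a) \<bind> (\<lambda>s. pmf_of_set (positions xs b) \<bind> (\<lambda>t. return_pmf (s, t)))"
    if "(a, b) \<in> ?val ` ?D" for a b
  proof -
    have "{d \<in> ?D. ?val d = (a, b)} = positions xs a \<times> positions xs b"
      "positions xs a \<times> positions xs b \<noteq> {}"
      using that desc_pairs_fibre[of xs a b] by (auto split: if_splits)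
    then show ?thesis
      by (simp add: pmf_of_set_Times positions_def)
  qed
  have "pmf_of_set ?D = Jpmf ns h \<bind> (\<lambda>v. pmf_of_set {d \<in> ?D. ?val d = v})"
    unfolding J using ne by (rule pmf_of_set_eq_bind_fibres[OF finite_desc_pairs])
  also have "\<dots> = Jpmf ns h \<bind> (\<lambda>(a, b). pmf_of_set (positions xs a) \<bind>
            (\<lambda>s. pmf_of_set (positions xs b) \<bind> (\<lambda>t. return_pmf (s, t))))"
  proof (intro bind_pmf_cong refl)
    fix v assume "v \<in> set_pmf (Jpmf ns h)"
    then have "v \<in> ?val ` ?D"
      using ne by (simp add: J)
    then show "pmf_of_set {d \<in> ?D. ?val d = v} = (case v of (a, b) \<Rightarrow> pmf_of_set (positions xs a) \<bind>
            (\<lambda>s. pmf_of_set (positions xs b) \<bind> (\<lambda>t. return_pmf (s, t))))"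
      using fibre by (cases v) simp
  qed
  finally show ?thesis
    by (simp add: map_bind_pmf case_prod_beta')
qed

lemma step_desc_pair_to_nondesc_pair:
  assumes "i \<noteq> j" "i < length xs" "j < length xs" "(s, t) \<in> desc_pairs xs" "xs ! i \<le> xs ! j"
    and "landing i j s t = (u, v)"
  shows "step xs i j s t ! j < step xs i j s t ! i" "(u, v) \<in> nondesc_pairs (step xs i j s t)"
proof -
  have "s < length xs" "t < length xs" "s \<noteq> t" "xs ! t < xs ! s"
    using assms(4) by (auto simp: desc_pairs_def)
  then show "step xs i j s t ! j < step xs i j s t ! i" "(u, v) \<in> nondesc_pairs (step xs i j s t)"
    using assms landing_bounded[OF _ _ _ _ _ assms(6)]
    by (simp_all add: step_nth_i_j step_nth_landing nondesc_pairs_def)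
qed

lemma step_nondesc_pair_to_desc_pair:
  assumes "i \<noteq> j" "i < length xs" "j < length xs" "(u, v) \<in> nondesc_pairs xs" "xs ! j < xs ! i"
    and "landing i j u v = (s, t)"
  shows "step xs i j u v ! i \<le> step xs i j u v ! j" "(s, t) \<in> desc_pairs (step xs i j u v)"
proof -
  have "u < length xs" "v < length xs" "u \<noteq> v" "xs ! u \<le> xs ! v"
    using assms(4) by (auto simp: nondesc_pairs_def)
  then show "step xs i j u v ! i \<le> step xs i j u v ! j" "(s, t) \<in> desc_pairs (step xs i j u v)"
    using assms landing_bounded[OF _ _ _ _ _ assms(6)]
    by (simp_all add: step_nth_i_j step_nth_landing desc_pairs_def)
qed

lemma bij_betw_step_landing:
  assumes ij: "i < j" "j < total ns h" and \<sigma>: "\<sigma> \<in> mperms ns h" "\<sigma> ! j < \<sigma> ! i"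
  shows "bij_betw (\<lambda>(u, v). (step \<sigma> i j u v, landing i j u v)) (nondesc_pairs \<sigma>)
           (SIGMA xs:{xs \<in> mperms ns h. \<not> xs ! j < xs ! i}. {(s, t) \<in> desc_pairs xs. step xs i j s t = \<sigma>})"
    (is "bij_betw ?g _ ?S")
proof (rule bij_betw_byWitness[where f' = "\<lambda>(xs, s, t). landing i j s t"])
  show "\<forall>d \<in> nondesc_pairs \<sigma>. (\<lambda>(xs, s, t). landing i j s t) (?g d) = d"
    by (auto simp: nondesc_pairs_def landing_landing split: prod.splits)
  show "?g ` nondesc_pairs \<sigma> \<subseteq> ?S"
  proof (rule image_subsetI)
    fix d assume "d \<in> nondesc_pairs \<sigma>"
    moreover obtain u v where d: "d = (u, v)"
      by fastforce
    ultimately have uv: "(u, v) \<in> nondesc_pairs \<sigma>"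
      by simp
    obtain s t where st: "landing i j u v = (s, t)"
      by fastforce
    have "u \<noteq> v" "u < length \<sigma>" "v < length \<sigma>"
      using uv by (auto simp: nondesc_pairs_def)
    then show "?g d \<in> ?S"
      using step_nondesc_pair_to_desc_pair[OF _ _ _ uv _ st] landing_landing[OF _ st]
        step_step[of i j u v \<sigma> s t] step_in_mperms[OF \<sigma>(1)] ij \<sigma> length_mperms
      by (simp add: d st not_less)
  qed
  have "?g (landing i j s t) = (xs, s, t)" if "(xs, s, t) \<in> ?S" for xs s t
  proof -
    have xs: "xs \<in> mperms ns h" "(s, t) \<in> desc_pairs xs" "step xs i j s t = \<sigma>"
      using that by simp_all
    obtain u v where uv: "landing i j s t = (u, v)"
      by fastforce
    have "s \<noteq> t" "s < length xs" "t < length xs"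
      using xs(2) by (auto simp: desc_pairs_def)
    then show ?thesis
      using step_step[of i j s t xs u v] landing_landing[OF _ uv] uv xs ij length_mperms by auto
  qed
  then show "\<forall>e \<in> ?S. ?g ((\<lambda>(xs, s, t). landing i j s t) e) = e"
    by fast
  show "(\<lambda>(xs, s, t). landing i j s t) ` ?S \<subseteq> nondesc_pairs \<sigma>"
  proof (rule image_subsetI)
    fix e assume "e \<in> ?S"
    moreover obtain xs s t where e: "e = (xs, s, t)"
      by (cases e) blast
    ultimately have xs: "xs \<in> mperms ns h" "\<not> xs ! j < xs ! i" "(s, t) \<in> desc_pairs xs" "step xs i j s t = \<sigma>"
      by simp_all
    obtain u v where uv: "landing i j s t = (u, v)"
      by fastforce
    then show "(\<lambda>(xs, s, t). landing i j s t) e \<in> nondesc_pairs \<sigma>"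
      using step_desc_pair_to_nondesc_pair[OF _ _ _ xs(3) _ uv] xs ij length_mperms by (simp add: e not_less)
  qed
qed

lemma card_step_preimage:
  assumes ij: "i < j" "j < total ns h"
  shows "card (SIGMA xs:{xs \<in> mperms ns h. \<not> xs ! j < xs ! i}.
                {(s, t) \<in> desc_pairs xs. step xs i j s t = \<sigma>})
         = (if \<sigma> \<in> mperms ns h \<and> \<sigma> ! j < \<sigma> ! i then card (nondesc_pairs \<sigma>) else 0)"
    (is "card ?S = _")
proof (cases "\<sigma> \<in> mperms ns h \<and> \<sigma> ! j < \<sigma> ! i")
  case True
  then show ?thesis
    using bij_betw_step_landing[OF ij] bij_betw_same_card by fastforce
next
  case False
  have "\<sigma> \<in> mperms ns h \<and> \<sigma> ! j < \<sigma> ! i" if "(xs, s, t) \<in> ?S" for xs s t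
  proof -
    have xs: "xs \<in> mperms ns h" "(s, t) \<in> desc_pairs xs" "step xs i j s t = \<sigma>"
      using that by simp_all
    then have "s \<noteq> t" "s < length xs" "t < length xs" "xs ! t < xs ! s" "length xs = total ns h"
      by (auto simp: desc_pairs_def length_mperms)
    then show ?thesis
      using xs ij step_in_mperms[of xs ns h i j s t] step_nth_i_j[of i j s t xs] by simp
  qed
  then have "?S = {}"
    using False by fast
  then show ?thesis
    using False by auto
qed

definition rearrange_pmf :: "nat list \<Rightarrow> nat \<Rightarrow> nat \<Rightarrow> nat list pmf" where
  "rearrange_pmf xs i j =
     (if xs ! j < xs ! i then return_pmf xs
      else map_pmf (\<lambda>(s, t). step xs i j s t) (pmf_of_set (desc_pairs xs)))"

lemma pistar_pmf_eq_bind_rearrange_pmf: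
  assumes "Jmset ns h \<noteq> {#}"
  shows "pistar_pmf ns h
           = pi_pmf ns h \<bind> (\<lambda>xs. pmf_of_set (Ipairs (total ns h)) \<bind> (\<lambda>(i, j). rearrange_pmf xs i j))"
proof -
  have "(Jpmf ns h \<bind> (\<lambda>(a, b). if xs ! j < xs ! i then return_pmf xs
            else pmf_of_set (positions xs a) \<bind> (\<lambda>is. pmf_of_set (positions xs b) \<bind>
              (\<lambda>js. return_pmf (step xs i j is js))))) = rearrange_pmf xs i j"
    if xs: "xs \<in> mperms ns h" for xs i j
  proof (cases "xs ! j < xs ! i")
    case True
    then show ?thesis
      by (simp add: rearrange_pmf_def split_def)
  next
    case False
    then show ?thesis
      using xs assms by (simp add: rearrange_pmf_def bind_Jpmf_positions desc_pairs_nonempty)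
  qed
  then show ?thesis
    unfolding pistar_pmf_def pi_pmf_def
    by (intro bind_pmf_cong refl) (auto simp: finite_mperms mperms_nonempty)
qed

lemma pmf_rearrange_pmf:
  assumes "desc_pairs xs \<noteq> {}"
  shows "pmf (rearrange_pmf xs i j) \<sigma>
    = (if xs ! j < xs ! i then indicator {xs} \<sigma>
       else card {(s, t) \<in> desc_pairs xs. step xs i j s t = \<sigma>} / card (desc_pairs xs))"
proof -
  have "desc_pairs xs \<inter> (\<lambda>(s, t). step xs i j s t) -` {\<sigma>} = {(s, t) \<in> desc_pairs xs. step xs i j s t = \<sigma>}"
    by auto
  then show ?thesis
    using assms by (simp add: rearrange_pmf_def pmf_map measure_pmf_of_set indicator_def)
qed

lemma sum_pmf_rearrange_pmf:
  assumes J: "Jmset ns h \<noteq> {#}" and ij: "i < j" "j < total ns h"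
  shows "(\<Sum>xs\<in>mperms ns h. pmf (rearrange_pmf xs i j) \<sigma>)
    = (if \<sigma> \<in> mperms ns h \<and> \<sigma> ! j < \<sigma> ! i
       then card {(u, v). u < total ns h \<and> v < total ns h \<and> u \<noteq> v} / size (Jmset ns h) else 0)"
proof -
  let ?M = "mperms ns h" and ?T = "real (size (Jmset ns h))"
  let ?F = "\<lambda>xs. {(s, t) \<in> desc_pairs xs. step xs i j s t = \<sigma>}"
  let ?A = "{xs \<in> ?M. \<not> xs ! j < xs ! i}"
  let ?P = "\<sigma> \<in> ?M \<and> \<sigma> ! j < \<sigma> ! i"
  have "(\<Sum>xs\<in>?M. pmf (rearrange_pmf xs i j) \<sigma>)
      = (\<Sum>xs\<in>?M. if xs = \<sigma> \<and> \<sigma> ! j < \<sigma> ! i then 1 else 0)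
        + (\<Sum>xs\<in>?M. if \<not> xs ! j < xs ! i then card (?F xs) / ?T else 0)"
    unfolding sum.distrib[symmetric] using J
    by (intro sum.cong refl) (auto simp: pmf_rearrange_pmf desc_pairs_nonempty card_desc_pairs indicator_def)
  also have "(\<Sum>xs\<in>?M. if xs = \<sigma> \<and> \<sigma> ! j < \<sigma> ! i then 1 else 0) = (if ?P then 1 else 0)"
    by (cases "\<sigma> ! j < \<sigma> ! i") (simp_all add: finite_mperms sum.delta')
  also have "(\<Sum>xs\<in>?M. if \<not> xs ! j < xs ! i then card (?F xs) / ?T else 0) = card (Sigma ?A ?F) / ?T"
  proof -
    have "finite (?F xs)" for xs
      by (rule finite_subset[OF _ finite_desc_pairs[of xs]]) auto
    then have "card (Sigma ?A ?F) = (\<Sum>xs\<in>?A. card (?F xs))"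
      by (simp add: card_SigmaI finite_mperms)
    then show ?thesis
      by (simp add: sum.inter_filter[symmetric] finite_mperms sum_divide_distrib)
  qed
  also have "card (Sigma ?A ?F) = (if ?P then card (nondesc_pairs \<sigma>) else 0)"
    using card_step_preimage[OF ij] .
  finally show ?thesis
    using card_desc_pairs_add_nondesc_pairs[of \<sigma>] card_desc_pairs[of \<sigma>] J
    by (auto simp: length_mperms field_simps)
qed

lemma inversions_eq_card_Ipairs:
  "inversions xs = card {(i, j) \<in> Ipairs (length xs). xs ! j < xs ! i}"
  unfolding inversions_def Ipairs_def by (rule arg_cong[where f = card]) auto

(* The constant equals 2 / T, but only proportionality to inversions * pmf pi is needed. *)
lemma pmf_pistar_pmf:
  assumes J: "Jmset ns h \<noteq> {#}" and I: "Ipairs (total ns h) \<noteq> {}"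
  shows "pmf (pistar_pmf ns h) \<sigma>
    = card {(u, v). u < total ns h \<and> v < total ns h \<and> u \<noteq> v}
        / (size (Jmset ns h) * card (Ipairs (total ns h))) * inversions \<sigma> * pmf (pi_pmf ns h) \<sigma>"
proof -
  let ?M = "mperms ns h" and ?I = "Ipairs (total ns h)"
  let ?C = "card {(u, v). u < total ns h \<and> v < total ns h \<and> u \<noteq> v} / real (size (Jmset ns h))"
  have finI: "finite ?I"
    by (rule finite_subset[of _ "{..<total ns h} \<times> {..<total ns h}"]) (auto simp: Ipairs_def)
  have "pmf (pistar_pmf ns h) \<sigma>
      = (\<Sum>xs\<in>?M. (\<Sum>p\<in>?I. pmf (case p of (i, j) \<Rightarrow> rearrange_pmf xs i j) \<sigma>) / card ?I) / card ?M"
    by (simp add: pistar_pmf_eq_bind_rearrange_pmf[OF J] pi_pmf_def pmf_bind_pmf_of_set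
        finite_mperms mperms_nonempty I finI)
  also have "\<dots> = (\<Sum>p\<in>?I. \<Sum>xs\<in>?M. pmf (case p of (i, j) \<Rightarrow> rearrange_pmf xs i j) \<sigma>) / (card ?I * card ?M)"
    by (simp add: sum_divide_distrib[symmetric] sum.swap[of _ ?M])
  also have "(\<Sum>p\<in>?I. \<Sum>xs\<in>?M. pmf (case p of (i, j) \<Rightarrow> rearrange_pmf xs i j) \<sigma>)
      = (\<Sum>p\<in>?I. if \<sigma> \<in> ?M \<and> \<sigma> ! snd p < \<sigma> ! fst p then ?C else 0)"
    using J by (intro sum.cong refl) (auto simp: Ipairs_def sum_pmf_rearrange_pmf)
  also have "\<dots> = (if \<sigma> \<in> ?M then ?C * inversions \<sigma> else 0)"
    using finI by (auto simp: inversions_eq_card_Ipairs length_mperms sum.If_cases Int_def case_prod_beta')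
  finally show ?thesis
    by (auto simp: pi_pmf_def finite_mperms mperms_nonempty)
qed

theorem lemma2p8:
  fixes ns :: "nat \<Rightarrow> nat" and h :: nat
  assumes "h \<ge> 2"
    and "\<forall>a\<in>{1..h}. ns a > 0"
    and "total ns h \<ge> 4"
  shows "size_biased (map_pmf (\<lambda>xs. real (inversions xs)) (pi_pmf ns h))
                     (map_pmf (\<lambda>xs. real (inversions xs)) (pistar_pmf ns h))"
proof -
  have "count (Jmset ns h) (2, 1) > 0"
    using assms(1,2) by (simp add: count_Jmset)
  then have J: "Jmset ns h \<noteq> {#}"
    by auto
  have "(0, 1) \<in> Ipairs (total ns h)"
    using assms(3) by (simp add: Ipairs_def)
  then have I: "Ipairs (total ns h) \<noteq> {}"
    by auto
  show ?thesis
    by (rule size_biased_map_pmfI[OF _ pmf_pistar_pmf[OF J I]])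
       (simp add: pi_pmf_def finite_mperms mperms_nonempty)
qed

end
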